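(* Let $t,w,w',n,g$ be positive integers. If there exists a Steiner system $\mathrm{S}(t,w',n)$ and a $\mathrm{GMHP}^*(t,w,w',g)$, then there exists a $\mathrm{GMHP}^*(t,w,n,g)$.
   Context: A Steiner system $\mathrm{S}(t,k,n)$ is a pair $(X,\mathcal{B})$ with $|X|=n$ and $\mathcal{B}$ a family of $k$-subsets (blocks) of $X$ such that every $t$-subset of $X$ lies in exactly one block. For a set $Y$ of size $m$, let $X=Y\times[g]$ with groups $\{y\}\times[g]$, $y\in Y$. An H-packing $\mathrm{HP}(m,g,w,t)$ is a family of $w$-subsets (blocks) of $X$, each meeting every group in at most one point, such that every $t$-subset of $X$ with points in $t$ distinct groups lies in at most one block. A block $\{(y_1,a_1),\dots,(y_w,a_w)\}$ is identified with the word indexed by $Y$ over $\{0\}\cup[g]$ with entry $a_s$ at coordinate $y_s$ and $0$ elsewhere. A $\mathrm{GMHP}^*(t,w,m,g)$ is an $\mathrm{HP}(m,g,w,t)$ in which any two distinct blocks have Hamming distance at least $2(w-t+1)$ and which has exactly $g^{t-1}\binom{m}{t}/\binom{w}{t}$ blocks. *)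

theory Defs
  imports Complex_Main
begin

definition steiner_system :: "nat \<Rightarrow> nat \<Rightarrow> 'a set \<Rightarrow> 'a set set \<Rightarrow> bool" where
  "steiner_system t k X B \<longleftrightarrow>
     (\<forall>b\<in>B. b \<subseteq> X \<and> card b = k) \<and>
     (\<forall>T. T \<subseteq> X \<longrightarrow> card T = t \<longrightarrow> (\<exists>!b. b \<in> B \<and> T \<subseteq> b))"

definition exists_steiner :: "nat \<Rightarrow> nat \<Rightarrow> nat \<Rightarrow> bool" where
  "exists_steiner t k n \<longleftrightarrow>
     (\<exists>(X::nat set) B. finite X \<and> card X = n \<and> steiner_system t k X B)"

text \<open>Point set Y \<times> [g], with groups {y} \<times> [g].\<close>
definition hpoints :: "'a set \<Rightarrow> nat \<Rightarrow> ('a \<times> nat) set" where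
  "hpoints Y g = Y \<times> {1..g}"

definition h_packing :: "'a set \<Rightarrow> nat \<Rightarrow> nat \<Rightarrow> nat \<Rightarrow> ('a \<times> nat) set set \<Rightarrow> bool" where
  "h_packing Y g w t B \<longleftrightarrow>
     (\<forall>b\<in>B. b \<subseteq> hpoints Y g \<and> card b = w \<and> inj_on fst b) \<and>
     (\<forall>T. T \<subseteq> hpoints Y g \<longrightarrow> card T = t \<longrightarrow> inj_on fst T \<longrightarrow>
          card {b\<in>B. T \<subseteq> b} \<le> 1)"

definition block_word :: "('a \<times> nat) set \<Rightarrow> 'a \<Rightarrow> nat" where
  "block_word b y = (if (\<exists>a. (y, a) \<in> b) then (THE a. (y, a) \<in> b) else 0)"

definition hamming_dist :: "'a set \<Rightarrow> ('a \<Rightarrow> nat) \<Rightarrow> ('a \<Rightarrow> nat) \<Rightarrow> nat" where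
  "hamming_dist Y u v = card {y\<in>Y. u y \<noteq> v y}"

definition gmhp_star :: "nat \<Rightarrow> nat \<Rightarrow> 'a set \<Rightarrow> nat \<Rightarrow> ('a \<times> nat) set set \<Rightarrow> bool" where
  "gmhp_star t w Y g B \<longleftrightarrow>
     h_packing Y g w t B \<and>
     (\<forall>b\<in>B. \<forall>b'\<in>B. b \<noteq> b' \<longrightarrow>
        hamming_dist Y (block_word b) (block_word b') \<ge> 2 * (w - t + 1)) \<and>
     finite B \<and>
     (of_nat (card B) :: rat) = of_nat (g ^ (t - 1) * (card Y choose t)) / of_nat (w choose t)"

definition exists_gmhp_star :: "nat \<Rightarrow> nat \<Rightarrow> nat \<Rightarrow> nat \<Rightarrow> bool" where
  "exists_gmhp_star t w m g \<longleftrightarrow>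
     (\<exists>(Y::nat set) B. finite Y \<and> card Y = m \<and> gmhp_star t w Y g B)"

end

theory Submission
  imports Defs
begin

text \<open>Fix, for every block S of the Steiner system, a bijection from the point set Y of the
  given GMHP* onto S, and put a relabelled copy of the GMHP* on each block. A set of t points in
  distinct groups lies over a unique Steiner block, so only the copy on that block can contain
  it. Two blocks of the same copy keep their Hamming distance; blocks of different copies have
  supports inside two Steiner blocks, which meet in fewer than t points, so their supports
  differ in more than w - t points on each side. Double counting t-subsets gives
  |SB| * C(w',t) = C(n,t), which yields exactly the required number of blocks.\<close>

section \<open>Block words and Hamming distance\<close>

lemma block_word_eq:
  assumes "inj_on fst c" "(y, a) \<in> c"
  shows "block_word c y = a"
proof -
  have "a' = a" if "(y, a') \<in> c" for a'
    using inj_onD[OF assms(1) _ that assms(2)] by simp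
  then have "(THE a. (y, a) \<in> c) = a"
    by (rule the_equality[where P = "\<lambda>a. (y, a) \<in> c", OF assms(2)])
  then show ?thesis
    using assms(2) unfolding block_word_def by auto
qed

lemma block_word_eq_0: "y \<notin> fst ` c \<Longrightarrow> block_word c y = 0"
  unfolding block_word_def by force

lemma block_word_nonzero:
  assumes "c \<subseteq> hpoints Y g" "inj_on fst c" "y \<in> fst ` c"
  shows "block_word c y \<noteq> 0"
proof -
  obtain a where "(y, a) \<in> c"
    using assms(3) by force
  then show ?thesis
    using block_word_eq[OF assms(2)] assms(1) by (force simp: hpoints_def)
qed

lemma hamming_dist_ge_support_diff:
  assumes "finite X" "c1 \<subseteq> hpoints X g" "c2 \<subseteq> hpoints X g" "inj_on fst c1" "inj_on fst c2"
  shows "card (fst ` c1 - fst ` c2) + card (fst ` c2 - fst ` c1)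
           \<le> hamming_dist X (block_word c1) (block_word c2)"
proof -
  have supports: "fst ` c1 \<subseteq> X" "fst ` c2 \<subseteq> X"
    using assms(2,3) by (auto simp: hpoints_def)
  have "block_word c1 x \<noteq> block_word c2 x"
    if "x \<in> (fst ` c1 - fst ` c2) \<union> (fst ` c2 - fst ` c1)" for x
    using that block_word_nonzero[OF assms(2,4), of x] block_word_nonzero[OF assms(3,5), of x]
      block_word_eq_0[of x c1] block_word_eq_0[of x c2] by (metis DiffE UnE)
  then have "(fst ` c1 - fst ` c2) \<union> (fst ` c2 - fst ` c1) \<subseteq> {x\<in>X. block_word c1 x \<noteq> block_word c2 x}"
    using supports by blast
  then have "card ((fst ` c1 - fst ` c2) \<union> (fst ` c2 - fst ` c1))
               \<le> hamming_dist X (block_word c1) (block_word c2)"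
    unfolding hamming_dist_def using assms(1) by (intro card_mono) auto
  moreover have "card ((fst ` c1 - fst ` c2) \<union> (fst ` c2 - fst ` c1))
                   = card (fst ` c1 - fst ` c2) + card (fst ` c2 - fst ` c1)"
    using supports assms(1) by (intro card_Un_disjoint) (auto intro: finite_subset)
  ultimately show ?thesis
    by simp
qed

lemma hamming_dist_ge_if_small_overlap:
  assumes "finite X" "c1 \<subseteq> hpoints X g" "c2 \<subseteq> hpoints X g" "inj_on fst c1" "inj_on fst c2"
    and "card c1 = w" "card c2 = w" "card (fst ` c1 \<inter> fst ` c2) < t" "t \<le> w"
  shows "2 * (w - t + 1) \<le> hamming_dist X (block_word c1) (block_word c2)"
proof -
  have "fst ` c1 \<subseteq> X"
    using assms(2) by (auto simp: hpoints_def)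
  then have "finite (fst ` c1 \<inter> fst ` c2)"
    using assms(1) by (meson finite_Int finite_subset)
  moreover have "card (fst ` c1) = w" "card (fst ` c2) = w"
    using assms(4-7) by (simp_all add: card_image)
  ultimately have "card (fst ` c1 - fst ` c2) = w - card (fst ` c1 \<inter> fst ` c2)"
                  "card (fst ` c2 - fst ` c1) = w - card (fst ` c1 \<inter> fst ` c2)"
    by (simp_all add: card_Diff_subset_Int Int_commute)
  then show ?thesis
    using hamming_dist_ge_support_diff[OF assms(1-5)] assms(8,9) by arith
qed

section \<open>Relabelling blocks along a map of coordinates\<close>

definition relabel :: "('a \<Rightarrow> 'b) \<Rightarrow> ('a \<times> nat) set \<Rightarrow> ('b \<times> nat) set" where
  "relabel h c = apfst h ` c"

lemma fst_relabel: "fst ` relabel h c = h ` fst ` c"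
  unfolding relabel_def by force

lemma relabel_subset_hpoints: "c \<subseteq> hpoints Y g \<Longrightarrow> relabel h c \<subseteq> hpoints (h ` Y) g"
  unfolding relabel_def hpoints_def by force

lemma relabel_mono: "c \<subseteq> c' \<Longrightarrow> relabel h c \<subseteq> relabel h c'"
  unfolding relabel_def by (rule image_mono)

lemma inj_on_apfst_block: "inj_on h (fst ` c) \<Longrightarrow> inj_on (apfst h) c"
  by (rule inj_on_subset[of _ "fst ` c \<times> UNIV"]) (force simp: inj_on_apfst)+

lemma card_relabel: "inj_on h (fst ` c) \<Longrightarrow> card (relabel h c) = card c"
  unfolding relabel_def by (simp add: card_image inj_on_apfst_block)

lemma inj_on_fst_relabel:
  assumes "inj_on h (fst ` c)" "inj_on fst c"
  shows "inj_on fst (relabel h c)"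
proof -
  have "inj_on (fst \<circ> apfst h) c"
    using comp_inj_on[OF assms(2,1)] by (simp add: fst_comp_apfst)
  then show ?thesis
    unfolding relabel_def by (rule inj_on_imageI)
qed

lemma relabel_relabel_inverse:
  "(\<And>y. y \<in> fst ` c \<Longrightarrow> h' (h y) = y) \<Longrightarrow> relabel h' (relabel h c) = c"
  unfolding relabel_def image_image by (force simp: apfst_compose)

lemma block_word_relabel:
  assumes "inj_on h Y" "fst ` c \<subseteq> Y" "inj_on fst c" "y \<in> Y"
  shows "block_word (relabel h c) (h y) = block_word c y"
proof (cases "y \<in> fst ` c")
  case True
  then obtain a where a: "(y, a) \<in> c"
    by force
  then have "(h y, a) \<in> relabel h c"
    unfolding relabel_def by force
  moreover have "inj_on h (fst ` c)"
    using assms(1,2) by (rule inj_on_subset)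
  ultimately show ?thesis
    using block_word_eq[OF inj_on_fst_relabel[OF _ assms(3)]] block_word_eq[OF assms(3) a] by simp
next
  case False
  then have "h y \<notin> fst ` relabel h c"
    using assms(1,2,4) unfolding fst_relabel by (metis image_mono inj_on_image_mem_iff)
  then show ?thesis
    using False by (simp add: block_word_eq_0)
qed

lemma block_word_relabel_outside:
  "x \<notin> h ` Y \<Longrightarrow> fst ` c \<subseteq> Y \<Longrightarrow> block_word (relabel h c) x = 0"
  by (rule block_word_eq_0) (auto simp: fst_relabel)

lemma hamming_dist_relabel:
  assumes "inj_on h Y" "h ` Y \<subseteq> X"
    and "fst ` c1 \<subseteq> Y" "fst ` c2 \<subseteq> Y" "inj_on fst c1" "inj_on fst c2"
  shows "hamming_dist X (block_word (relabel h c1)) (block_word (relabel h c2))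
           = hamming_dist Y (block_word c1) (block_word c2)"
proof -
  have "{x\<in>X. block_word (relabel h c1) x \<noteq> block_word (relabel h c2) x}
          = h ` {y\<in>Y. block_word c1 y \<noteq> block_word c2 y}"
    (is "?L = ?R")
  proof
    show "?L \<subseteq> ?R"
    proof
      fix x assume x: "x \<in> ?L"
      then have "x \<in> h ` Y"
        using block_word_relabel_outside[OF _ assms(3)] block_word_relabel_outside[OF _ assms(4)]
        by force
      then obtain y where "y \<in> Y" "x = h y"
        by blast
      then show "x \<in> ?R"
        using x block_word_relabel[OF assms(1,3,5)] block_word_relabel[OF assms(1,4,6)] by auto
    qed
    show "?R \<subseteq> ?L"
      using assms(2) block_word_relabel[OF assms(1,3,5)] block_word_relabel[OF assms(1,4,6)] by auto
  qed
  moreover have "inj_on h {y\<in>Y. block_word c1 y \<noteq> block_word c2 y}"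
    using assms(1) by (rule inj_on_subset) auto
  ultimately show ?thesis
    unfolding hamming_dist_def by (simp add: card_image)
qed

lemma inj_on_relabel:
  assumes "inj_on h Y" "\<And>c. c \<in> B \<Longrightarrow> fst ` c \<subseteq> Y"
  shows "inj_on (relabel h) B"
proof (rule inj_on_inverseI)
  fix c assume "c \<in> B"
  then show "relabel (inv_into Y h) (relabel h c) = c"
    using assms(2) inv_into_f_f[OF assms(1)] by (intro relabel_relabel_inverse) blast
qed

lemma subset_relabel_iff:
  assumes "bij_betw h Y S" "fst ` T \<subseteq> S" "fst ` c \<subseteq> Y"
  shows "T \<subseteq> relabel h c \<longleftrightarrow> relabel (inv_into Y h) T \<subseteq> c"
proof
  assume "T \<subseteq> relabel h c"
  then have "relabel (inv_into Y h) T \<subseteq> relabel (inv_into Y h) (relabel h c)"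
    by (rule relabel_mono)
  also have "\<dots> = c"
    using assms(1,3) by (intro relabel_relabel_inverse) (auto simp: bij_betw_def)
  finally show "relabel (inv_into Y h) T \<subseteq> c" .
next
  assume "relabel (inv_into Y h) T \<subseteq> c"
  then have "relabel h (relabel (inv_into Y h) T) \<subseteq> relabel h c"
    by (rule relabel_mono)
  moreover have "relabel h (relabel (inv_into Y h) T) = T"
    using assms(1,2) by (intro relabel_relabel_inverse) (auto simp: bij_betw_def f_inv_into_f)
  ultimately show "T \<subseteq> relabel h c"
    by simp
qed

lemma h_packing_at_most_one:
  "h_packing Y g w t B \<Longrightarrow> T \<subseteq> hpoints Y g \<Longrightarrow> card T = t \<Longrightarrow> inj_on fst T
     \<Longrightarrow> card {b \<in> B. T \<subseteq> b} \<le> 1"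
  unfolding h_packing_def by blast

lemma h_packing_block:
  "h_packing Y g w t B \<Longrightarrow> c \<in> B \<Longrightarrow> c \<subseteq> hpoints Y g \<and> card c = w \<and> inj_on fst c"
  unfolding h_packing_def by blast

lemma h_packing_relabel:
  assumes "bij_betw h Y S" "h_packing Y g w t B"
  shows "h_packing S g w t (relabel h ` B)"
proof -
  have blocks: "c \<subseteq> hpoints Y g" "card c = w" "inj_on fst c" if "c \<in> B" for c
    using h_packing_block[OF assms(2) that] by simp_all
  then have supports: "fst ` c \<subseteq> Y" if "c \<in> B" for c
    using that by (force simp: hpoints_def)
  have inj_h: "inj_on h (fst ` c)" if "c \<in> B" for c
    using assms(1) supports[OF that] by (auto simp: bij_betw_def intro: inj_on_subset)
  have "relabel h c \<subseteq> hpoints S g \<and> card (relabel h c) = w \<and> inj_on fst (relabel h c)"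
    if "c \<in> B" for c
    using relabel_subset_hpoints[OF blocks(1)[OF that], of h] assms(1) blocks(2,3)[OF that]
      card_relabel[OF inj_h[OF that]] inj_on_fst_relabel[OF inj_h[OF that]]
    by (simp add: bij_betw_def)
  moreover have "card {b \<in> relabel h ` B. T \<subseteq> b} \<le> 1"
    if T: "T \<subseteq> hpoints S g" "card T = t" "inj_on fst T" for T
  proof -
    have support_T: "fst ` T \<subseteq> S"
      using T(1) by (force simp: hpoints_def)
    have bij_inv: "bij_betw (inv_into Y h) S Y"
      using assms(1) by (rule bij_betw_inv_into)
    then have inj_inv: "inj_on (inv_into Y h) (fst ` T)"
      using support_T by (auto simp: bij_betw_def intro: inj_on_subset)
    define T' where "T' = relabel (inv_into Y h) T"
    have "T' \<subseteq> hpoints Y g" "card T' = t" "inj_on fst T'"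
      using relabel_subset_hpoints[OF T(1), of "inv_into Y h"] bij_inv T(2,3)
        card_relabel[OF inj_inv] inj_on_fst_relabel[OF inj_inv]
      by (simp_all add: T'_def bij_betw_def)
    then have "card {c \<in> B. T' \<subseteq> c} \<le> 1"
      by (intro h_packing_at_most_one[OF assms(2)])
    moreover have "{b \<in> relabel h ` B. T \<subseteq> b} = relabel h ` {c \<in> B. T' \<subseteq> c}"
      using subset_relabel_iff[OF assms(1) support_T supports] unfolding T'_def by blast
    moreover have "inj_on (relabel h) {c \<in> B. T' \<subseteq> c}"
      using assms(1) supports by (intro inj_on_relabel) (auto simp: bij_betw_def)
    ultimately show ?thesis
      by (simp add: card_image)
  qed
  ultimately show ?thesis
    unfolding h_packing_def by blast
qed

section \<open>Steiner systems\<close>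

lemma steiner_system_block:
  "steiner_system t k X SB \<Longrightarrow> S \<in> SB \<Longrightarrow> S \<subseteq> X \<and> card S = k"
  unfolding steiner_system_def by blast

lemma steiner_system_covers:
  assumes "steiner_system t k X SB" "T \<subseteq> X" "card T = t"
  obtains S where "S \<in> SB" "T \<subseteq> S"
  using assms unfolding steiner_system_def by (metis (no_types, lifting))

lemma steiner_system_finite:
  assumes "steiner_system t k X SB" "finite X"
  shows "finite SB"
proof (rule finite_subset)
  show "SB \<subseteq> Pow X"
    using assms(1) unfolding steiner_system_def by blast
qed (simp add: assms(2))

lemma steiner_system_unique_block:
  assumes "steiner_system t k X SB" "S1 \<in> SB" "S2 \<in> SB" "T \<subseteq> S1" "T \<subseteq> S2" "card T = t"
  shows "S1 = S2"
proof -
  have "T \<subseteq> X"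
    using steiner_system_block[OF assms(1,2)] assms(4) by blast
  then show ?thesis
    using assms unfolding steiner_system_def by blast
qed

lemma steiner_system_inter_card_less:
  assumes "steiner_system t k X SB" "S1 \<in> SB" "S2 \<in> SB" "S1 \<noteq> S2"
  shows "card (S1 \<inter> S2) < t"
proof (rule ccontr)
  assume "\<not> card (S1 \<inter> S2) < t"
  then obtain T where "T \<subseteq> S1 \<inter> S2" "card T = t"
    by (meson not_less obtain_subset_with_card_n)
  then show False
    using steiner_system_unique_block[OF assms(1-3)] assms(4) by blast
qed

lemma steiner_system_card_blocks:
  assumes "steiner_system t k X SB" "finite X"
  shows "card SB * (k choose t) = card X choose t"
proof -
  have blocks: "S \<subseteq> X" "card S = k" if "S \<in> SB" for S
    using steiner_system_block[OF assms(1) that] by simp_all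
  let ?subsets = "\<lambda>S. {T. T \<subseteq> S \<and> card T = t}"
  have partition: "?subsets X = (\<Union>S\<in>SB. ?subsets S)"
  proof
    show "?subsets X \<subseteq> (\<Union>S\<in>SB. ?subsets S)"
    proof
      fix T assume "T \<in> ?subsets X"
      then have "T \<subseteq> X" "card T = t"
        by simp_all
      then obtain S where "S \<in> SB" "T \<subseteq> S"
        by (rule steiner_system_covers[OF assms(1)])
      then show "T \<in> (\<Union>S\<in>SB. ?subsets S)"
        using \<open>card T = t\<close> by blast
    qed
    show "(\<Union>S\<in>SB. ?subsets S) \<subseteq> ?subsets X"
      using blocks(1) by blast
  qed
  have "card X choose t = card (\<Union>S\<in>SB. ?subsets S)"
    using n_subsets[OF assms(2), of t] by (simp only: partition)
  also have "\<dots> = (\<Sum>S\<in>SB. card (?subsets S))"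
  proof (rule card_UN_disjoint[OF steiner_system_finite[OF assms]])
    show "\<forall>S\<in>SB. finite (?subsets S)"
    proof
      fix S assume "S \<in> SB"
      then have "finite (Pow S)"
        using finite_subset[OF blocks(1) assms(2)] by simp
      then show "finite (?subsets S)"
        by (rule rev_finite_subset) blast
    qed
    show "\<forall>S1\<in>SB. \<forall>S2\<in>SB. S1 \<noteq> S2 \<longrightarrow> ?subsets S1 \<inter> ?subsets S2 = {}"
      using steiner_system_unique_block[OF assms(1)] by blast
  qed
  also have "\<dots> = (\<Sum>S\<in>SB. k choose t)"
  proof (rule sum.cong)
    fix S assume "S \<in> SB"
    then show "card (?subsets S) = k choose t"
      using n_subsets[OF finite_subset[OF blocks(1) assms(2)]] blocks(2) by simp
  qed simp
  finally show ?thesis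
    by simp
qed

lemma steiner_system_block_bijections:
  assumes "steiner_system t k X SB" "finite X" "finite Y" "card Y = k"
  obtains f where "\<And>S. S \<in> SB \<Longrightarrow> bij_betw (f S) Y S"
proof -
  have bij_exists: "\<exists>h. bij_betw h Y S" if "S \<in> SB" for S
  proof (rule finite_same_card_bij)
    have "S \<subseteq> X" "card S = k"
      using steiner_system_block[OF assms(1) that] by simp_all
    then show "finite S" "card Y = card S"
      using assms(2,4) by (simp_all add: finite_subset)
  qed (rule assms(3))
  show ?thesis
  proof (rule that)
    fix S assume "S \<in> SB"
    then show "bij_betw (SOME h. bij_betw h Y S) Y S"
      by (rule someI_ex[OF bij_exists])
  qed
qed

section \<open>A GMHP* on every block of a Steiner system\<close>

text \<open>For w < t the required number of blocks is 0, since C(w,t) = 0 and division by zero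
  yields 0 in the rationals.\<close>

lemma gmhp_star_empty: "w < t \<Longrightarrow> gmhp_star t w X g {}"
  unfolding gmhp_star_def h_packing_def by simp

locale steiner_composition =
  fixes t k w g :: nat
    and X :: "'x set" and SB :: "'x set set"
    and Y :: "'y set" and B :: "('y \<times> nat) set set"
    and f :: "'x set \<Rightarrow> 'y \<Rightarrow> 'x"
  assumes steiner: "steiner_system t k X SB"
    and finite_X: "finite X"
    and gmhp: "gmhp_star t w Y g B"
    and card_Y: "card Y = k"
    and block_bij: "\<And>S. S \<in> SB \<Longrightarrow> bij_betw (f S) Y S"
    and t_le_w: "t \<le> w"
begin

definition composed_blocks :: "('x \<times> nat) set set" where
  "composed_blocks = (\<Union>S\<in>SB. relabel (f S) ` B)"

lemma h_packing_B: "h_packing Y g w t B"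
  using gmhp unfolding gmhp_star_def by (elim conjE)

lemma finite_B: "finite B"
  using gmhp unfolding gmhp_star_def by (elim conjE)

lemma distance_B:
  "c \<in> B \<Longrightarrow> c' \<in> B \<Longrightarrow> c \<noteq> c' \<Longrightarrow> 2 * (w - t + 1) \<le> hamming_dist Y (block_word c) (block_word c')"
  using gmhp unfolding gmhp_star_def by blast

lemma card_B: "(of_nat (card B) :: rat) = of_nat (g ^ (t - 1) * (k choose t)) / of_nat (w choose t)"
  using gmhp card_Y unfolding gmhp_star_def by blast

lemma support_subset_Y: "c \<in> B \<Longrightarrow> fst ` c \<subseteq> Y"
  using h_packing_block[OF h_packing_B] by (force simp: hpoints_def)

lemma h_packing_on_block: "S \<in> SB \<Longrightarrow> h_packing S g w t (relabel (f S) ` B)"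
  by (rule h_packing_relabel[OF block_bij h_packing_B])

lemma relabelled_block:
  assumes "S \<in> SB" "c \<in> B"
  shows "relabel (f S) c \<subseteq> hpoints S g" "card (relabel (f S) c) = w"
    and "inj_on fst (relabel (f S) c)"
  using h_packing_block[OF h_packing_on_block[OF assms(1)]] assms(2) by blast+

lemma support_relabelled_block:
  assumes "S \<in> SB" "c \<in> B"
  shows "fst ` relabel (f S) c \<subseteq> S" "card (fst ` relabel (f S) c) = w"
  using relabelled_block[OF assms] by (auto simp: hpoints_def card_image)

lemma composed_block:
  assumes "b \<in> composed_blocks"
  shows "b \<subseteq> hpoints X g" "card b = w" "inj_on fst b"
proof -
  obtain S c where S: "S \<in> SB" and "c \<in> B" "b = relabel (f S) c"
    using assms unfolding composed_blocks_def by blast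
  then have "b \<subseteq> hpoints S g" "card b = w" "inj_on fst b"
    using relabelled_block by blast+
  then show "b \<subseteq> hpoints X g" "card b = w" "inj_on fst b"
    using steiner_system_block[OF steiner S] unfolding hpoints_def by blast+
qed

lemma relabelled_families_disjoint:
  assumes "S1 \<in> SB" "S2 \<in> SB" "S1 \<noteq> S2"
  shows "relabel (f S1) ` B \<inter> relabel (f S2) ` B = {}"
proof (rule ccontr)
  assume "relabel (f S1) ` B \<inter> relabel (f S2) ` B \<noteq> {}"
  then obtain c1 c2 where c: "c1 \<in> B" "c2 \<in> B" "relabel (f S1) c1 = relabel (f S2) c2"
    by blast
  then have "fst ` relabel (f S1) c1 \<subseteq> S1 \<inter> S2"
    using support_relabelled_block(1) assms(1,2) by (metis le_inf_iff)
  moreover have "finite (S1 \<inter> S2)"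
    using steiner_system_block[OF steiner assms(1)] finite_X by (meson finite_Int finite_subset)
  ultimately have "w \<le> card (S1 \<inter> S2)"
    using support_relabelled_block(2)[OF assms(1) c(1)] card_mono by metis
  then show False
    using steiner_system_inter_card_less[OF steiner assms] t_le_w by simp
qed

lemma card_composed_blocks: "card composed_blocks = card SB * card B"
proof -
  have inj: "inj_on (relabel (f S)) B" if "S \<in> SB" for S
    using block_bij[OF that] support_subset_Y
    by (intro inj_on_relabel) (auto simp: bij_betw_def)
  have "card composed_blocks = (\<Sum>S\<in>SB. card (relabel (f S) ` B))"
    unfolding composed_blocks_def
  proof (rule card_UN_disjoint)
    show "finite SB"
      by (rule steiner_system_finite[OF steiner finite_X])
    show "\<forall>S\<in>SB. finite (relabel (f S) ` B)"
      using finite_B by blast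
    show "\<forall>S1\<in>SB. \<forall>S2\<in>SB. S1 \<noteq> S2 \<longrightarrow> relabel (f S1) ` B \<inter> relabel (f S2) ` B = {}"
      using relabelled_families_disjoint by blast
  qed
  also have "\<dots> = card SB * card B"
    using inj by (simp add: card_image)
  finally show ?thesis .
qed

lemma composed_blocks_packing:
  assumes T: "T \<subseteq> hpoints X g" "card T = t" "inj_on fst T"
  shows "card {b \<in> composed_blocks. T \<subseteq> b} \<le> 1"
proof -
  have "fst ` T \<subseteq> X" "card (fst ` T) = t"
    using T by (auto simp: hpoints_def card_image)
  then obtain S where S: "S \<in> SB" "fst ` T \<subseteq> S"
    by (rule steiner_system_covers[OF steiner])
  have "{b \<in> composed_blocks. T \<subseteq> b} = {b \<in> relabel (f S) ` B. T \<subseteq> b}"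
  proof
    show "{b \<in> composed_blocks. T \<subseteq> b} \<subseteq> {b \<in> relabel (f S) ` B. T \<subseteq> b}"
    proof
      fix b assume b: "b \<in> {b \<in> composed_blocks. T \<subseteq> b}"
      then obtain S' c where S': "S' \<in> SB" "c \<in> B" "b = relabel (f S') c"
        unfolding composed_blocks_def by blast
      then have "fst ` T \<subseteq> S'"
        using b support_relabelled_block(1)[OF S'(1,2)] by blast
      then have "S' = S"
        using steiner_system_unique_block[OF steiner S'(1) S(1) _ S(2) \<open>card (fst ` T) = t\<close>] by blast
      then show "b \<in> {b \<in> relabel (f S) ` B. T \<subseteq> b}"
        using b S' by blast
    qed
    show "{b \<in> relabel (f S) ` B. T \<subseteq> b} \<subseteq> {b \<in> composed_blocks. T \<subseteq> b}"
      unfolding composed_blocks_def using S(1) by blast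
  qed
  moreover have "T \<subseteq> hpoints S g"
    using T(1) S(2) unfolding hpoints_def by force
  ultimately show ?thesis
    using h_packing_at_most_one[OF h_packing_on_block[OF S(1)] _ T(2,3)] by simp
qed

lemma composed_blocks_distance:
  assumes "b \<in> composed_blocks" "b' \<in> composed_blocks" "b \<noteq> b'"
  shows "2 * (w - t + 1) \<le> hamming_dist X (block_word b) (block_word b')"
proof -
  obtain S c where S: "S \<in> SB" "c \<in> B" and b: "b = relabel (f S) c"
    using assms(1) unfolding composed_blocks_def by blast
  obtain S' c' where S': "S' \<in> SB" "c' \<in> B" and b': "b' = relabel (f S') c'"
    using assms(2) unfolding composed_blocks_def by blast
  show ?thesis
  proof (cases "S = S'")
    case True
    have "inj_on (f S) Y" "f S ` Y \<subseteq> X"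
      using block_bij[OF S(1)] steiner_system_block[OF steiner S(1)] by (auto simp: bij_betw_def)
    then have "hamming_dist X (block_word b) (block_word b')
                 = hamming_dist Y (block_word c) (block_word c')"
      unfolding b b' True[symmetric]
      using support_subset_Y[OF S(2)] support_subset_Y[OF S'(2)]
        h_packing_block[OF h_packing_B S(2)] h_packing_block[OF h_packing_B S'(2)]
      by (intro hamming_dist_relabel) auto
    moreover have "c \<noteq> c'"
      using assms(3) b b' True by blast
    ultimately show ?thesis
      using distance_B[OF S(2) S'(2)] by simp
  next
    case False
    have "fst ` b \<inter> fst ` b' \<subseteq> S \<inter> S'"
      using support_relabelled_block(1)[OF S] support_relabelled_block(1)[OF S'] b b' by blast
    moreover have "finite (S \<inter> S')"
      using steiner_system_block[OF steiner S(1)] finite_X by (meson finite_Int finite_subset)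
    ultimately have "card (fst ` b \<inter> fst ` b') < t"
      using steiner_system_inter_card_less[OF steiner S(1) S'(1) False] card_mono
      by (meson le_less_trans)
    then show ?thesis
      using composed_block[OF assms(1)] composed_block[OF assms(2)] t_le_w
      by (intro hamming_dist_ge_if_small_overlap[OF finite_X]) auto
  qed
qed

lemma composed_blocks_gmhp_star: "gmhp_star t w X g composed_blocks"
proof -
  have "h_packing X g w t composed_blocks"
    unfolding h_packing_def using composed_block composed_blocks_packing by blast
  moreover have "finite composed_blocks"
    unfolding composed_blocks_def using steiner_system_finite[OF steiner finite_X] finite_B by blast
  moreover have "(of_nat (card composed_blocks) :: rat)
                   = of_nat (g ^ (t - 1) * (card X choose t)) / of_nat (w choose t)"
  proof -
    have "(of_nat (card composed_blocks) :: rat) = of_nat (card SB) * of_nat (card B)"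
      by (simp add: card_composed_blocks)
    also have "\<dots> = of_nat (g ^ (t - 1) * (card SB * (k choose t))) / of_nat (w choose t)"
      by (simp add: card_B)
    also have "\<dots> = of_nat (g ^ (t - 1) * (card X choose t)) / of_nat (w choose t)"
      by (simp only: steiner_system_card_blocks[OF steiner finite_X])
    finally show ?thesis .
  qed
  ultimately show ?thesis
    unfolding gmhp_star_def using composed_blocks_distance by blast
qed

end

theorem lemma3p8:
  fixes t w w' n g :: nat
  assumes "t > 0" "w > 0" "w' > 0" "n > 0" "g > 0"
    and "exists_steiner t w' n"
    and "exists_gmhp_star t w w' g"
  shows "exists_gmhp_star t w n g"
proof -
  obtain X :: "nat set" and SB
    where X: "finite X" "card X = n" and steiner: "steiner_system t w' X SB"
    using assms(6) unfolding exists_steiner_def by blast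
  obtain Y :: "nat set" and B
    where Y: "finite Y" "card Y = w'" and gmhp: "gmhp_star t w Y g B"
    using assms(7) unfolding exists_gmhp_star_def by blast
  have "\<exists>NB. gmhp_star t w X g NB"
  proof (cases "t \<le> w")
    case True
    obtain f where "\<And>S. S \<in> SB \<Longrightarrow> bij_betw (f S) Y S"
      using steiner_system_block_bijections[OF steiner X(1) Y] by blast
    then interpret steiner_composition t w' w g X SB Y B f
      using steiner X(1) gmhp Y(2) True by unfold_locales
    show ?thesis
      using composed_blocks_gmhp_star by blast
  next
    case False
    then show ?thesis
      using gmhp_star_empty by (meson not_le)
  qed
  then show ?thesis
    using X unfolding exists_gmhp_star_def by blast
qed

end
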